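(* Let $G=C_{2n}(a,n)$ with $a\in\{1,2\}$ be a connected cubic circulant graph and $\mathbf e=(e_1,\ldots,e_{t-1})$ a tuple of (possibly repeated) edges of $G$. Assume that $G_{\mathbf e}$ has a loop at the vertex $j$. Then $\{j,v\}\in E(G_{\mathbf e})$ for all $v\in V(G)$.
   Context: For integers $1\le a<n$, $C_{2n}(a,n)$ is the simple graph on vertex set $[2n]$ in which distinct vertices $i,j$ are adjacent iff $|i-j|\in\{a,n,2n-a\}$. Two vertices $u,v$ (possibly $u=v$) are even-connected with respect to $\mathbf e$ if there is a walk $p_0p_1\cdots p_{2k+1}$, $k\ge1$, in $G$ with $p_0=u$, $p_{2k+1}=v$, each $\{p_r,p_{r+1}\}$ ($0\le r\le 2k$) an edge of $G$, each $\{p_{2l+1},p_{2l+2}\}$ ($0\le l\le k-1$) equal to some $e_i$, and for every $i$ the number of $l$ with $\{p_{2l+1},p_{2l+2}\}=e_i$ is at most the number of indices $j$ with $e_j=e_i$. $G_{\mathbf e}$ is the graph (possibly with loops) on $V(G)$ with edge set $E(G)\cup\{\{u,v\}\mid u,v \text{ even-connected with respect to } \mathbf e\}$; a loop at $j$ means $\{j,j\}\in E(G_{\mathbf e})$. *)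

theory Defs
  imports Main
begin

definition circ_vertices :: "nat \<Rightarrow> nat set" where
  "circ_vertices n = {1..2*n}"

definition circ_adj :: "nat \<Rightarrow> nat \<Rightarrow> nat \<Rightarrow> nat \<Rightarrow> bool" where
  "circ_adj n a i j \<longleftrightarrow> i \<in> circ_vertices n \<and> j \<in> circ_vertices n \<and> i \<noteq> j
     \<and> nat \<bar>int i - int j\<bar> \<in> {a, n, 2*n - a}"

definition edges_of :: "('v \<Rightarrow> 'v \<Rightarrow> bool) \<Rightarrow> 'v set set" where
  "edges_of adj = {{u, v} | u v. adj u v}"

definition graph_connected :: "'v set \<Rightarrow> ('v \<Rightarrow> 'v \<Rightarrow> bool) \<Rightarrow> bool" where
  "graph_connected V adj \<longleftrightarrow> (\<forall>u\<in>V. \<forall>v\<in>V. adj\<^sup>*\<^sup>* u v)"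

definition graph_cubic :: "'v set \<Rightarrow> ('v \<Rightarrow> 'v \<Rightarrow> bool) \<Rightarrow> bool" where
  "graph_cubic V adj \<longleftrightarrow> (\<forall>v\<in>V. card {u. adj v u} = 3)"

text \<open>Even-connectedness of u and v with respect to the tuple es = (e_1,...,e_{t-1})
  (a list of edges): a walk p_0 p_1 ... p_{2k+1}, k \<ge> 1, from u to v in the graph,
  whose odd steps {p_{2l+1}, p_{2l+2}} are among the e_i, each e_i used at most as
  often as it occurs in es.\<close>
definition even_connected ::
  "('v \<Rightarrow> 'v \<Rightarrow> bool) \<Rightarrow> 'v set list \<Rightarrow> 'v \<Rightarrow> 'v \<Rightarrow> bool" where
  "even_connected adj es u v \<longleftrightarrow>
     (\<exists>p :: 'v list. \<exists>k :: nat. k \<ge> 1 \<and> length p = 2*k + 2 \<and>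
        p ! 0 = u \<and> p ! (2*k + 1) = v \<and>
        (\<forall>r \<le> 2*k. {p ! r, p ! (r+1)} \<in> edges_of adj) \<and>
        (\<forall>l < k. {p ! (2*l+1), p ! (2*l+2)} \<in> set es) \<and>
        (\<forall>i < length es.
           card {l. l < k \<and> {p ! (2*l+1), p ! (2*l+2)} = es ! i}
             \<le> card {j. j < length es \<and> es ! j = es ! i}))"

text \<open>Edge set of G_e (loops appear as singleton sets {j,j} = {j}).\<close>
definition edges_Ge :: "('v \<Rightarrow> 'v \<Rightarrow> bool) \<Rightarrow> 'v set list \<Rightarrow> 'v set set" where
  "edges_Ge adj es = edges_of adj \<union> {{u, v} | u v. even_connected adj es u v}"

end

theory Submission
  imports Defs
begin

text \<open>A loop at \<open>j\<close> is a closed walk \<open>j = p_0, ..., p_(2k+1) = j\<close> of odd length whose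
  odd-numbered steps are drawn from \<open>e\<close>. If some \<open>p_i\<close> is adjacent to \<open>v\<close>, then a prefix of this
  walk or of its reversal, followed by the edge \<open>p_i v\<close>, is a walk of the same kind from \<open>j\<close> to
  \<open>v\<close> (or just the edge \<open>j v\<close> when \<open>i = 0\<close>). Such a \<open>p_i\<close> exists for every \<open>v \<noteq> j\<close>. For
  \<open>a = 1\<close> the graph is a Moebius ladder, and for \<open>a = 2\<close> connectivity forces \<open>n\<close> to be odd
  and the graph is a prism over an \<open>n\<close>-cycle; either way, deleting the rung \<open>{v, v + n}\<close> leaves
  a ladder, which is bipartite. So the odd closed walk passes through \<open>v\<close> or its antipode,
  both of which lie in the closed neighbourhood of \<open>v\<close>.\<close>

lemma doubleton_in_edges_of_iff:
  assumes "symp adj"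
  shows "{x, y} \<in> edges_of adj \<longleftrightarrow> adj x y"
  using assms unfolding edges_of_def by (auto simp: doubleton_eq_iff dest: sympD)

definition even_walk :: "('v \<Rightarrow> 'v \<Rightarrow> bool) \<Rightarrow> 'v set list \<Rightarrow> nat \<Rightarrow> 'v list \<Rightarrow> bool" where
  "even_walk adj es k p \<longleftrightarrow> length p = 2*k + 2 \<and>
     (\<forall>r \<le> 2*k. {p ! r, p ! (r+1)} \<in> edges_of adj) \<and>
     (\<forall>l < k. {p ! (2*l+1), p ! (2*l+2)} \<in> set es) \<and>
     (\<forall>i < length es.
        card {l. l < k \<and> {p ! (2*l+1), p ! (2*l+2)} = es ! i}
          \<le> card {j. j < length es \<and> es ! j = es ! i})"

lemma even_connected_iff_even_walk:
  "even_connected adj es u v \<longleftrightarrow>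
     (\<exists>p k. 1 \<le> k \<and> even_walk adj es k p \<and> p ! 0 = u \<and> p ! (2*k+1) = v)"
  unfolding even_connected_def even_walk_def by blast

lemma even_walk_reindex:
  assumes "even_walk adj es k p" "length q = 2*k' + 2"
    "\<forall>r \<le> 2*k'. {q ! r, q ! (r+1)} \<in> edges_of adj"
    "inj_on f {..<k'}"
    "\<forall>l < k'. f l < k \<and> {q ! (2*l+1), q ! (2*l+2)} = {p ! (2*f l+1), p ! (2*f l+2)}"
  shows "even_walk adj es k' q"
  unfolding even_walk_def
proof (intro conjI allI impI)
  show "length q = 2*k' + 2" "\<And>r. r \<le> 2*k' \<Longrightarrow> {q ! r, q ! (r+1)} \<in> edges_of adj"
    using assms(2,3) by auto
  show "{q ! (2*l+1), q ! (2*l+2)} \<in> set es" if "l < k'" for l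
  proof -
    have "f l < k" "{q ! (2*l+1), q ! (2*l+2)} = {p ! (2*f l+1), p ! (2*f l+2)}"
      using assms(5) that by auto
    then show ?thesis using assms(1) unfolding even_walk_def by auto
  qed
  fix i assume i: "i < length es"
  let ?Q = "{l. l < k' \<and> {q ! (2*l+1), q ! (2*l+2)} = es ! i}"
  let ?P = "{l. l < k \<and> {p ! (2*l+1), p ! (2*l+2)} = es ! i}"
  have "card ?Q = card (f ` ?Q)"
    by (intro card_image[symmetric] inj_on_subset[OF assms(4)]) auto
  also have "\<dots> \<le> card ?P"
    using assms(5) by (intro card_mono) auto
  also have "\<dots> \<le> card {j. j < length es \<and> es ! j = es ! i}"
    using assms(1) i unfolding even_walk_def by blast
  finally show "card ?Q \<le> card {j. j < length es \<and> es ! j = es ! i}" .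
qed

lemma even_walk_rev:
  assumes "even_walk adj es k p"
  shows "even_walk adj es k (rev p)"
proof (rule even_walk_reindex[OF assms, where f = "\<lambda>l. k - 1 - l"])
  have len: "length p = 2*k + 2" using assms unfolding even_walk_def by blast
  then have rev_nth': "rev p ! r = p ! (2*k + 1 - r)" if "r \<le> 2*k + 1" for r
    using that by (simp add: rev_nth)
  show "length (rev p) = 2*k + 2" using len by simp
  show "\<forall>r \<le> 2*k. {rev p ! r, rev p ! (r+1)} \<in> edges_of adj"
  proof (intro allI impI)
    fix r assume r: "r \<le> 2*k"
    have "{p ! (2*k - r), p ! (2*k - r + 1)} \<in> edges_of adj"
      using assms unfolding even_walk_def by simp
    moreover have "2*k - r + 1 = 2*k + 1 - r" "2*k + 1 - (r+1) = 2*k - r" using r by auto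
    ultimately show "{rev p ! r, rev p ! (r+1)} \<in> edges_of adj"
      using r by (simp add: rev_nth' insert_commute)
  qed
  show "inj_on (\<lambda>l. k - 1 - l) {..<k}" by (auto simp: inj_on_def)
  show "\<forall>l < k. k - 1 - l < k \<and>
    {rev p ! (2*l+1), rev p ! (2*l+2)} = {p ! (2*(k-1-l)+1), p ! (2*(k-1-l)+2)}"
  proof (intro allI impI conjI)
    fix l assume l: "l < k"
    then show "k - 1 - l < k" by simp
    have "2*k + 1 - (2*l+1) = 2*(k-1-l)+2" "2*k + 1 - (2*l+2) = 2*(k-1-l)+1" using l by auto
    then show "{rev p ! (2*l+1), rev p ! (2*l+2)} = {p ! (2*(k-1-l)+1), p ! (2*(k-1-l)+2)}"
      using l by (simp add: rev_nth' insert_commute)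
  qed
qed

lemma even_walk_prefix_step:
  assumes "even_walk adj es k p" "m \<le> k" "adj (p ! (2*m)) v"
  shows "even_walk adj es m (take (2*m+1) p @ [v])"
proof -
  define q where "q = take (2*m+1) p @ [v]"
  have "length p = 2*k + 2" using assms(1) unfolding even_walk_def by blast
  then have len: "length q = 2*m + 2" and q_prefix: "\<And>r. r \<le> 2*m \<Longrightarrow> q ! r = p ! r"
    and q_last: "q ! (2*m+1) = v"
    using assms(2) by (auto simp: q_def nth_append)
  have "\<forall>r \<le> 2*m. {q ! r, q ! (r+1)} \<in> edges_of adj"
  proof (intro allI impI)
    fix r assume r: "r \<le> 2*m"
    show "{q ! r, q ! (r+1)} \<in> edges_of adj"
    proof (cases "r = 2*m")
      case True then show ?thesis using assms(3) q_last by (auto simp: q_prefix edges_of_def)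
    next
      case False then show ?thesis using assms(1,2) r by (auto simp: q_prefix even_walk_def)
    qed
  qed
  moreover have
    "\<forall>l < m. id l < k \<and> {q ! (2*l+1), q ! (2*l+2)} = {p ! (2*id l+1), p ! (2*id l+2)}"
    using assms(2) by (auto simp: q_prefix)
  ultimately have "even_walk adj es m q"
    by (intro even_walk_reindex[OF assms(1) len, of id]) auto
  then show ?thesis by (simp add: q_def)
qed

lemma closed_even_walk_extend:
  assumes walk: "even_walk adj es k p" "1 \<le> k" "p ! 0 = j" "p ! (2*k+1) = j"
    and i: "i \<le> 2*k+1" "adj (p ! i) v"
  shows "adj j v \<or> even_connected adj es j v"
proof -
  have from_even_index: "adj j v \<or> even_connected adj es j v"
    if "even_walk adj es k q" "q ! 0 = j" "m \<le> k" "adj (q ! (2*m)) v" for q m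
  proof (cases "m = 0")
    case True then show ?thesis using that by simp
  next
    case False
    have "even_walk adj es m (take (2*m+1) q @ [v])"
      using even_walk_prefix_step[OF that(1,3,4)] .
    moreover have "length q = 2*k + 2" using that(1) unfolding even_walk_def by blast
    ultimately have "even_connected adj es j v"
      unfolding even_connected_iff_even_walk using False that(2,3)
      by (intro exI[of _ "take (2*m+1) q @ [v]"] exI[of _ m]) (auto simp: nth_append)
    then show ?thesis ..
  qed
  show ?thesis
  proof (cases "even i")
    case True
    then obtain m where "i = 2*m" by blast
    moreover from this have "m \<le> k" using i(1) by simp
    ultimately show ?thesis using from_even_index[OF walk(1,3)] i(2) by simp
  next
    case False
    then obtain m where m: "i = 2*m + 1" by (blast elim: oddE)
    have "length p = 2*k + 2" using walk(1) unfolding even_walk_def by blast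
    moreover have "2*k + 1 - 2*(k - m) = i" using i(1) m by simp
    ultimately have "rev p ! 0 = j" "rev p ! (2*(k - m)) = p ! i"
      using walk(4) by (auto simp: rev_nth)
    then show ?thesis using from_even_index[OF even_walk_rev[OF walk(1)], of "k - m"] i(2) by simp
  qed
qed

lemma odd_closed_walk_meets:
  fixes c :: "'v \<Rightarrow> bool"
  assumes steps: "\<forall>r \<le> 2*k. adj (p ! r) (p ! (r+1))" and closed: "p ! (2*k+1) = p ! 0"
    and proper: "\<And>x y. adj x y \<Longrightarrow> x \<notin> S \<Longrightarrow> y \<notin> S \<Longrightarrow> c x \<noteq> c y"
  shows "\<exists>i \<le> 2*k+1. p ! i \<in> S"
proof (rule ccontr)
  assume "\<not> ?thesis"
  then have "c (p ! i) = (c (p ! 0) = even i)" if "i \<le> 2*k+1" for i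
    using that by (induction i) (use steps proper in auto)
  from this[of "2*k+1"] show False using closed by simp
qed

lemma circ_adj_symp: "symp (circ_adj n a)"
  unfolding circ_adj_def by (intro sympI) (auto simp: abs_minus_commute)

lemma circ_adj_cases:
  assumes "circ_adj n a x y" "a < n"
  shows "y = x + a \<or> x = y + a \<or> y = x + n \<or> x = y + n \<or> y + 2*n = x + a \<or> x + 2*n = y + a"
  using assms unfolding circ_adj_def nat_abs_int_diff by (auto split: if_splits)

lemma circ_adj_2_rtranclp_even_iff:
  assumes "even n" "(circ_adj n 2)\<^sup>*\<^sup>* x y"
  shows "even x \<longleftrightarrow> even y"
  using assms(2)
proof (induction rule: rtranclp_induct)
  case (step y z)
  then have "z = y + 2 \<or> y = z + 2 \<or> z = y + n \<or> y = z + n \<or> z + 2 = y + 2*n \<or> y + 2 = z + 2*n"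
    unfolding circ_adj_def nat_abs_int_diff by (auto split: if_splits)
  then show ?case using step.IH assms(1) by presburger
qed simp

lemma circ_connected_cases:
  assumes "a \<in> {1, 2}" "a < n" "graph_connected (circ_vertices n) (circ_adj n a)"
  shows "a = 1 \<or> a = 2 \<and> odd n"
proof (rule ccontr)
  assume "\<not> ?thesis"
  then have "a = 2" "even n" using assms(1) by auto
  moreover have "(circ_adj n a)\<^sup>*\<^sup>* 1 2"
    using assms(2,3) unfolding graph_connected_def circ_vertices_def by auto
  ultimately show False using circ_adj_2_rtranclp_even_iff[of n 1 2] by simp
qed

definition circ_offset :: "nat \<Rightarrow> nat \<Rightarrow> nat \<Rightarrow> nat" where
  "circ_offset n r x = (if r \<le> x then x - r else x + 2*n - r)"

lemma circ_offset_less: "r \<in> circ_vertices n \<Longrightarrow> x \<in> circ_vertices n \<Longrightarrow> circ_offset n r x < 2*n"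
  unfolding circ_offset_def circ_vertices_def by auto

lemma circ_offset_eq_0_iff:
  "r \<in> circ_vertices n \<Longrightarrow> x \<in> circ_vertices n \<Longrightarrow> circ_offset n r x = 0 \<longleftrightarrow> x = r"
  unfolding circ_offset_def circ_vertices_def by auto

lemma circ_offset_eq_n_iff:
  "r \<in> circ_vertices n \<Longrightarrow> x \<in> circ_vertices n \<Longrightarrow> circ_offset n r x = n \<longleftrightarrow> x = r + n \<or> r = x + n"
  unfolding circ_offset_def circ_vertices_def by auto

lemma circ_offset_shift:
  assumes "r \<in> circ_vertices n" "x \<in> circ_vertices n" "y \<in> circ_vertices n" "s \<le> n"
    "y = x + s \<or> y + 2*n = x + s"
  shows "circ_offset n r y = circ_offset n r x + s \<or> circ_offset n r y + 2*n = circ_offset n r x + s"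
  using assms unfolding circ_offset_def circ_vertices_def by auto

lemma circ_offset_adj:
  assumes "circ_adj n a x y" "r \<in> circ_vertices n" "a < n"
  defines "d \<equiv> circ_offset n r x" and "d' \<equiv> circ_offset n r y"
  shows "\<exists>s \<in> {a, n}. d' = d + s \<or> d' + 2*n = d + s \<or> d = d' + s \<or> d + 2*n = d' + s"
proof -
  have V: "x \<in> circ_vertices n" "y \<in> circ_vertices n" using assms(1) unfolding circ_adj_def by auto
  have "s \<le> n" if "s \<in> {a, n}" for s using that assms(3) by auto
  note forward = circ_offset_shift[OF assms(2) V this, folded d_def d'_def]
    and backward = circ_offset_shift[OF assms(2) V(2,1) this, folded d_def d'_def]
  show ?thesis
    using circ_adj_cases[OF assms(1,3)] forward[of a] forward[of n] backward[of a] backward[of n] by blast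
qed

text \<open>Offsets are taken from the vertex whose rung is deleted, so that this rung becomes
  \<open>{0, n}\<close>. Away from it, an offset \<open>d\<close> gets ladder coordinates (position, side) and is
  coloured by the parity of position plus side. In the Moebius ladder the position is \<open>d mod n\<close>
  and the side is \<open>n < d\<close>; in the prism (\<open>n\<close> odd) the side is the parity of \<open>d\<close> and the
  position is half of whichever of \<open>d\<close> and its rung partner \<open>d \<plusminus> n\<close> is even.\<close>

definition moebius_colour :: "nat \<Rightarrow> nat \<Rightarrow> bool" where
  "moebius_colour n d = (odd (if d < n then d else d - n) \<noteq> (n < d))"

definition prism_pos :: "nat \<Rightarrow> nat \<Rightarrow> nat" where
  "prism_pos n d =
     (if even d then d div 2 else if d < n then d div 2 + n div 2 + 1 else d div 2 - n div 2)"

definition prism_colour :: "nat \<Rightarrow> nat \<Rightarrow> bool" where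
  "prism_colour n d = (odd (prism_pos n d) \<noteq> odd d)"

lemma moebius_colour_step:
  assumes "d < 2*n" "d' < 2*n" "d \<notin> {0, n}" "d' \<notin> {0, n}" "s \<in> {1, n}"
    "d' = d + s \<or> d' + 2*n = d + s"
  shows "moebius_colour n d \<noteq> moebius_colour n d'"
  using assms unfolding moebius_colour_def by auto

lemma prism_colour_step:
  assumes "odd n" "1 < n" "d < 2*n" "d' < 2*n" "d \<notin> {0, n}" "d' \<notin> {0, n}" "s \<in> {2, n}"
    "d' = d + s \<or> d' + 2*n = d + s"
  shows "prism_colour n d \<noteq> prism_colour n d'"
proof -
  obtain m where n: "n = 2*m+1" using \<open>odd n\<close> by (blast elim: oddE)
  consider "d' = d + 2" | "d' + 2*n = d + 2" | "d' = d + n" | "d' + n = d"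
    using assms(3-8) by fastforce
  then have "prism_pos n d' = prism_pos n d + 1 \<and> odd d' = odd d \<or>
             prism_pos n d' = prism_pos n d \<and> odd d' \<noteq> odd d"
  proof cases
    case 1 then show ?thesis using n assms(3-6) unfolding prism_pos_def
      by (cases "even d"; auto elim!: evenE oddE)
  next
    case 2 then show ?thesis using n assms(2-6) unfolding prism_pos_def
      by (cases "even d"; cases "even d'"; auto elim!: evenE oddE; presburger)
  next
    case 3 then show ?thesis using n assms(3-6) unfolding prism_pos_def
      by (cases "even d"; auto elim!: evenE oddE)
  next
    case 4 then show ?thesis using n assms(3-6) unfolding prism_pos_def
      by (cases "even d"; cases "even d'"; auto elim!: evenE oddE; presburger)
  qed
  then show ?thesis unfolding prism_colour_def by auto
qed

definition circ_colour :: "nat \<Rightarrow> nat \<Rightarrow> nat \<Rightarrow> nat \<Rightarrow> bool" where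
  "circ_colour n a r x =
     (if a = 1 then moebius_colour n (circ_offset n r x) else prism_colour n (circ_offset n r x))"

lemma circ_colour_proper:
  assumes "a = 1 \<or> a = 2 \<and> odd n" "a < n" "r \<in> circ_vertices n" "circ_adj n a x y"
    "circ_offset n r x \<notin> {0, n}" "circ_offset n r y \<notin> {0, n}"
  shows "circ_colour n a r x \<noteq> circ_colour n a r y"
proof -
  define d d' where "d = circ_offset n r x" and "d' = circ_offset n r y"
  have "x \<in> circ_vertices n" "y \<in> circ_vertices n" using assms(4) unfolding circ_adj_def by auto
  then have less: "d < 2*n" "d' < 2*n" using circ_offset_less[OF assms(3)] by (auto simp: d_def d'_def)
  obtain s where s: "s \<in> {a, n}"
    and step: "d' = d + s \<or> d' + 2*n = d + s \<or> d = d' + s \<or> d + 2*n = d' + s"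
    using circ_offset_adj[OF assms(4,3,2)] unfolding d_def d'_def by blast
  show ?thesis
  proof (cases "a = 1")
    case True
    then have "s \<in> {1, n}" using s by simp
    then have "moebius_colour n d \<noteq> moebius_colour n d'"
      using step moebius_colour_step[of d n d'] moebius_colour_step[of d' n d] less assms(5,6)
      unfolding d_def d'_def by metis
    then show ?thesis using True by (simp add: circ_colour_def d_def d'_def)
  next
    case False
    then have "odd n" "1 < n" "s \<in> {2, n}" using s assms(1,2) by auto
    then have "prism_colour n d \<noteq> prism_colour n d'"
      using step prism_colour_step[of n d d'] prism_colour_step[of n d' d] less assms(5,6)
      unfolding d_def d'_def by metis
    then show ?thesis using False by (simp add: circ_colour_def d_def d'_def)
  qed
qed

lemma circ_odd_closed_walk_dominates:
  assumes "a = 1 \<or> a = 2 \<and> odd n" "a < n" "v \<in> circ_vertices n" "v \<noteq> p ! 0"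
    and steps: "\<forall>r \<le> 2*k. circ_adj n a (p ! r) (p ! (r+1))" and closed: "p ! (2*k+1) = p ! 0"
  shows "\<exists>i \<le> 2*k+1. circ_adj n a (p ! i) v"
proof -
  obtain i where i: "i \<le> 2*k+1" "circ_offset n v (p ! i) \<in> {0, n}"
    using odd_closed_walk_meets[OF steps closed, of "{x. circ_offset n v x \<in> {0, n}}"]
      circ_colour_proper[OF assms(1-3)] by blast
  have vertex: "p ! i \<in> circ_vertices n"
  proof (cases i)
    case 0 then show ?thesis using steps[rule_format, of 0] unfolding circ_adj_def by simp
  next
    case (Suc r) then show ?thesis using i(1) steps[rule_format, of r] unfolding circ_adj_def by simp
  qed
  show ?thesis
  proof (cases "circ_offset n v (p ! i) = 0")
    case True
    then have "p ! i = v" using circ_offset_eq_0_iff[OF assms(3) vertex] by blast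
    then have "i \<noteq> 0" using assms(4) by (cases i) auto
    then have "circ_adj n a (p ! (i - 1)) v" using steps i(1) \<open>p ! i = v\<close> by (cases i) auto
    then show ?thesis using i(1) by (intro exI[of _ "i - 1"]) auto
  next
    case False
    then have "p ! i = v + n \<or> v = p ! i + n" using i(2) circ_offset_eq_n_iff[OF assms(3) vertex] by auto
    then have "circ_adj n a (p ! i) v"
      using vertex assms(2,3) unfolding circ_adj_def nat_abs_int_diff by auto
    then show ?thesis using i(1) by blast
  qed
qed

theorem lemma3p6:
  fixes n a j :: nat and es :: "nat set list"
  assumes "a \<in> {1, 2}" and "1 \<le> a" and "a < n"
    and "graph_connected (circ_vertices n) (circ_adj n a)"
    and "graph_cubic (circ_vertices n) (circ_adj n a)"
    and "\<forall>e \<in> set es. e \<in> edges_of (circ_adj n a)"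
    and "j \<in> circ_vertices n"
    and "{j, j} \<in> edges_Ge (circ_adj n a) es"
  shows "\<forall>v \<in> circ_vertices n. {j, v} \<in> edges_Ge (circ_adj n a) es"
proof
  fix v assume v: "v \<in> circ_vertices n"
  have cases: "a = 1 \<or> a = 2 \<and> odd n" using circ_connected_cases assms(1,3,4) .
  have "{j} \<notin> edges_of (circ_adj n a)" unfolding edges_of_def circ_adj_def by (auto simp: doubleton_eq_iff)
  then have "even_connected (circ_adj n a) es j j"
    using assms(8) unfolding edges_Ge_def by (auto simp: doubleton_eq_iff)
  then obtain p k where walk: "even_walk (circ_adj n a) es k p" "1 \<le> k" "p ! 0 = j" "p ! (2*k+1) = j"
    unfolding even_connected_iff_even_walk by blast
  then have steps: "\<forall>r \<le> 2*k. circ_adj n a (p ! r) (p ! (r+1))"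
    unfolding even_walk_def doubleton_in_edges_of_iff[OF circ_adj_symp] by blast
  show "{j, v} \<in> edges_Ge (circ_adj n a) es"
  proof (cases "v = j")
    case True then show ?thesis using assms(8) by simp
  next
    case False
    then obtain i where "i \<le> 2*k+1" "circ_adj n a (p ! i) v"
      using circ_odd_closed_walk_dominates[OF cases assms(3) v _ steps] walk(3,4) by auto
    then have "circ_adj n a j v \<or> even_connected (circ_adj n a) es j v"
      using closed_even_walk_extend[OF walk] by blast
    then show ?thesis unfolding edges_Ge_def edges_of_def by blast
  qed
qed

end
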